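(* Let $n$ be the number of workers, $q\ge n$ odd, $\theta=2\pi/q$, and positive integers $k_A,k_B$ with $k_Ak_B<n$. Let $\mathbf{R}_\theta = \begin{bmatrix}\cos\theta&-\sin\theta\\ \sin\theta&\cos\theta\end{bmatrix}$, and let $\mathbf{G}^A$ ($2k_A\times 2n$) and $\mathbf{G}^B$ ($2k_B\times 2n$) have $(i,j)$-th $2\times2$ blocks $\mathbf{G}^A_{i,j}=\mathbf{R}_\theta^{ji}$ and $\mathbf{G}^B_{i,j}=\mathbf{R}_\theta^{(jk_A)i}$. Split $\mathbf{A}\in\mathbb{R}^{t\times r}$ into $2k_A$ block-columns $\mathbf{A}_{\langle\alpha,\beta\rangle}$ and $\mathbf{B}\in\mathbb{R}^{t\times w}$ into $2k_B$ block-columns $\mathbf{B}_{\langle\alpha,\beta\rangle}$ ($\beta\in\{0,1\}$); worker $l$ stores $\hat{\mathbf{A}}_{\langle l,j\rangle}=\sum_{\alpha,\beta}\mathbf{G}^A(2\alpha+\beta,2l+j)\mathbf{A}_{\langle\alpha,\beta\rangle}$ and $\hat{\mathbf{B}}_{\langle l,j\rangle}=\sum_{\alpha,\beta}\mathbf{G}^B(2\alpha+\beta,2l+j)\mathbf{B}_{\langle\alpha,\beta\rangle}$ for $j\in\{0,1\}$ and returns $\hat{\mathbf{A}}_{\langle l,k_1\rangle}^T\hat{\mathbf{B}}_{\langle l,k_2\rangle}$ for all $k_1,k_2\in\{0,1\}$. Let $\tau=k_Ak_B$. Then the threshold of the scheme is $k_Ak_B$: for any distinct $i_0,\dots,i_{\tau-1}\in\{0,\dots,n-1\}$,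 the $4\tau\times4\tau$ recovery matrix $\tilde{\mathbf{G}}=[\mathbf{G}^A_{i_0}\otimes\mathbf{G}^B_{i_0}\,|\,\cdots\,|\,\mathbf{G}^A_{i_{\tau-1}}\otimes\mathbf{G}^B_{i_{\tau-1}}]$ is nonsingular (where $\mathbf{G}^A_l$, $\mathbf{G}^B_l$ denote the $l$-th block-columns, of width 2), and its worst-case condition number is bounded by $O(q^{\,q-k_Ak_B+c_1})$, $c_1=5.5$.
   Context: $\otimes$ is the Kronecker product. The worker's outputs satisfy $\hat{\mathbf{A}}_{\langle l,k_1\rangle}^T\hat{\mathbf{B}}_{\langle l,k_2\rangle}=\mathbf{Z}\cdot(\mathbf{G}^A(:,2l+k_1)\otimes\mathbf{G}^B(:,2l+k_2))$, where $\mathbf{Z}$ is the $1\times 4k_Ak_B$ block vector of all products $\mathbf{A}_{\langle a,\beta_1\rangle}^T\mathbf{B}_{\langle b,\beta_2\rangle}$, so decoding amounts to solving systems with matrix $\tilde{\mathbf{G}}$. $\kappa(\mathbf{M})=\|\mathbf{M}\|\|\mathbf{M}^{-1}\|$ with $\|\cdot\|$ the largest singular value. *)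

theory Defs
  imports Complex_Main "Jordan_Normal_Form.Matrix" "Jordan_Normal_Form.Char_Poly"
begin

definition rot :: "real \<Rightarrow> real mat" where
  "rot \<theta> = mat 2 2 (\<lambda>(i,j). if i = 0 \<and> j = 0 then cos \<theta> else if i = 0 \<and> j = 1 then - sin \<theta>
                            else if i = 1 \<and> j = 0 then sin \<theta> else cos \<theta>)"

definition GA :: "real \<Rightarrow> nat \<Rightarrow> nat \<Rightarrow> real mat" where
  "GA \<theta> kA n = mat (2*kA) (2*n)
     (\<lambda>(r,c). (rot \<theta> ^\<^sub>m ((c div 2) * (r div 2))) $$ (r mod 2, c mod 2))"

definition GB :: "real \<Rightarrow> nat \<Rightarrow> nat \<Rightarrow> nat \<Rightarrow> real mat" where
  "GB \<theta> kA kB n = mat (2*kB) (2*n)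
     (\<lambda>(r,c). (rot \<theta> ^\<^sub>m (((c div 2) * kA) * (r div 2))) $$ (r mod 2, c mod 2))"

definition block_col :: "real mat \<Rightarrow> nat \<Rightarrow> real mat" where
  "block_col G l = mat (dim_row G) 2 (\<lambda>(r,c). G $$ (r, 2*l + c))"

definition kron :: "real mat \<Rightarrow> real mat \<Rightarrow> real mat" where
  "kron A B = mat (dim_row A * dim_row B) (dim_col A * dim_col B)
     (\<lambda>(i,j). A $$ (i div dim_row B, j div dim_col B) * B $$ (i mod dim_row B, j mod dim_col B))"

definition recovery_mat :: "real \<Rightarrow> nat \<Rightarrow> nat \<Rightarrow> nat \<Rightarrow> nat list \<Rightarrow> real mat" where
  "recovery_mat \<theta> kA kB n idx = mat (4*kA*kB) (4 * length idx)
     (\<lambda>(r,c). kron (block_col (GA \<theta> kA n) (idx ! (c div 4)))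
                   (block_col (GB \<theta> kA kB n) (idx ! (c div 4))) $$ (r, c mod 4))"

definition spec_norm :: "real mat \<Rightarrow> real" where
  "spec_norm M = sqrt (Max {e. eigenvalue (transpose_mat M * M) e})"

definition inv_mat :: "real mat \<Rightarrow> real mat" where
  "inv_mat M = (THE B. B \<in> carrier_mat (dim_row M) (dim_row M) \<and> inverts_mat M B \<and> inverts_mat B M)"

definition cond_num :: "real mat \<Rightarrow> real" where
  "cond_num M = spec_norm M * spec_norm (inv_mat M)"

end

theory Submission
  imports Defs
begin

text \<open>Group the unknown vector \<open>v\<close> into the \<open>2 \<times> 2\<close> blocks \<open>X\<^sub>m\<close> of the workers and write each
  block as a pair of complex numbers: the complex-linear and the antilinear part of \<open>X\<^sub>m\<close>, viewed
  as a real-linear map of \<open>\<complex>\<close>. Rotations then act by multiplication with \<open>cis\<close>, and \<open>\<parallel>G v\<parallel>\<^sup>2\<close>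
  splits into squared trigonometric sums \<open>\<Sum>\<^sub>m cis (\<theta> i\<^sub>m e) y\<^sub>m\<close> whose exponents \<open>e = \<alpha> + k\<^sub>A \<beta>\<close>
  run over \<open>0, \<dots>, \<tau> - 1\<close> and \<open>e = \<alpha> - k\<^sub>A \<beta>\<close> over a shift of this range. These are two
  \<open>\<tau> \<times> \<tau>\<close> Vandermonde systems in the distinct \<open>q\<close>-th roots of unity \<open>x\<^sub>m = cis (\<theta> i\<^sub>m)\<close>, so
  \<open>\<parallel>v\<parallel> / (A \<tau>) \<le> \<parallel>G v\<parallel> \<le> \<tau> \<parallel>v\<parallel>\<close>, where \<open>A\<close> bounds the entries of the inverse Vandermonde matrix.

  Those entries are the coefficients of the Lagrange polynomials \<open>\<Prod>(X - x\<^sub>j) / \<Prod>(x\<^sub>i - x\<^sub>j)\<close>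
  over \<open>j \<noteq> i\<close>. Multiplying the numerator by the \<open>q - \<tau>\<close> factors \<open>X - x\<close> for the other roots of
  unity \<open>x\<close> gives \<open>(X\<^sup>q - 1) / (X - x\<^sub>i)\<close>, whose coefficients have modulus one; dividing back
  bounds the coefficients of the numerator by \<open>binomial (q - 1) (q - \<tau>)\<close>, and evaluating at
  \<open>x\<^sub>i\<close> bounds the denominator below by \<open>q / 2\<^bsup>q - \<tau>\<^esup>\<close>. Hence
  \<open>\<kappa>(G) \<le> A \<tau>\<^sup>2 \<le> 2 q\<^bsup>q - \<tau> + 1\<^esup>\<close>.\<close>

lemma sum_lessThan_2: "(\<Sum>i<2. f i) = f 0 + f (1::nat)"
  by (simp add: numeral_2_eq_2)

lemma sum_lessThan_mult: "(\<Sum>r<a * b. f r) = (\<Sum>x<a. \<Sum>y<b. f (x * b + y :: nat))"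
proof -
  have "sum f {x * b..<x * b + b} = (\<Sum>y<b. f (x * b + y))" for x
    using sum.shift_bounds_nat_ivl[of f 0 "x * b" b] by (simp add: atLeast0LessThan add.commute)
  then show ?thesis by (simp flip: sum.nat_group)
qed

lemma mult_add_less_mult:
  fixes x y a b :: nat
  assumes "x < a" "y < b"
  shows "x * b + y < a * b"
proof -
  have "x * b + y < Suc x * b" using assms(2) by simp
  also have "\<dots> \<le> a * b" using assms(1) by (intro mult_right_mono) auto
  finally show ?thesis .
qed

lemma sum_mixed_radix:
  "(\<Sum>\<alpha><kA. \<Sum>\<beta><kB. g (real \<alpha> + real kA * real \<beta>)) = (\<Sum>k<kA * kB. g (real k))"
proof -
  have "(\<Sum>k<kB * kA. g (real k)) = (\<Sum>\<beta><kB. \<Sum>\<alpha><kA. g (real (\<beta> * kA + \<alpha>)))"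
    by (rule sum_lessThan_mult)
  also have "\<dots> = (\<Sum>\<alpha><kA. \<Sum>\<beta><kB. g (real \<alpha> + real kA * real \<beta>))"
    by (subst sum.swap) (simp add: algebra_simps)
  finally show ?thesis by (simp add: mult.commute)
qed

lemma sum_mixed_radix_diff:
  assumes "0 < kB"
  shows "(\<Sum>\<alpha><kA. \<Sum>\<beta><kB. g (real \<alpha> - real kA * real \<beta>))
       = (\<Sum>k<kA * kB. g (- real kA * (real kB - 1) + real k))"
proof -
  have "(\<Sum>\<beta><kB. g (real \<alpha> - real kA * real \<beta>))
      = (\<Sum>\<beta><kB. g (- real kA * (real kB - 1) + (real \<alpha> + real kA * real \<beta>)))" for \<alpha>
  proof -
    have "real (kB - Suc \<beta>) = real kB - 1 - real \<beta>" if "\<beta> < kB" for \<beta>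
      using that by (simp add: of_nat_diff)
    then show ?thesis
      using sum.nat_diff_reindex[of "\<lambda>\<beta>. g (real \<alpha> - real kA * real \<beta>)" kB, symmetric]
      by (simp add: algebra_simps)
  qed
  then show ?thesis
    using sum_mixed_radix[of "\<lambda>x. g (- real kA * (real kB - 1) + x)"] by simp
qed

lemma square_sum_le_card_mult_sum_square:
  fixes f :: "'a \<Rightarrow> real"
  shows "(\<Sum>k\<in>A. f k)\<^sup>2 \<le> real (card A) * (\<Sum>k\<in>A. (f k)\<^sup>2)"
proof -
  have "(\<Sum>k\<in>A. f k)\<^sup>2 = (\<Sum>k\<in>A. \<Sum>j\<in>A. f k * f j)"
    by (simp add: power2_eq_square sum_product)
  also have "\<dots> \<le> (\<Sum>k\<in>A. \<Sum>j\<in>A. ((f k)\<^sup>2 + (f j)\<^sup>2) / 2)"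
    using sum_squares_bound[of "f _" "f _"] by (intro sum_mono) (simp add: field_simps)
  also have "\<dots> = real (card A) * (\<Sum>k\<in>A. (f k)\<^sup>2)"
    by (simp add: sum.distrib add_divide_distrib sum_divide_distrib[symmetric]
        sum_distrib_left[symmetric] sum.swap[of "\<lambda>k j. (f j)\<^sup>2 / 2"])
  finally show ?thesis .
qed

lemma two_pow_le_two_mult_fact: "(2::nat) ^ d \<le> 2 * fact d"
proof (induction d)
  case (Suc d)
  show ?case
  proof (cases "d = 0")
    case False
    have "(2::nat) ^ Suc d \<le> 2 * (2 * fact d)"
      using Suc.IH by simp
    also have "\<dots> \<le> 2 * (Suc d * fact d)"
      using False by (intro mult_left_mono mult_right_mono) auto
    finally show ?thesis by (simp add: fact_Suc[of d])
  qed simp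
qed simp

section \<open>Lagrange polynomials at roots of unity\<close>

lemma monic_eq_prod_roots:
  fixes p :: "'a::idom poly"
  assumes "finite S" "card S = degree p" "lead_coeff p = 1" "\<And>s. s \<in> S \<Longrightarrow> poly p s = 0"
  shows "p = (\<Prod>s\<in>S. [:-s, 1:])"
  using assms
proof (induction S arbitrary: p rule: finite_induct)
  case empty
  then show ?case by (metis card.empty degree_0_id one_pCons prod.empty)
next
  case (insert a S)
  obtain r where r: "p = [:-a, 1:] * r"
    using insert.prems(3) by (metis dvdE insertI1 poly_eq_0_iff_dvd)
  have "lead_coeff r = 1"
    using insert.prems(2) unfolding r lead_coeff_mult by simp
  then have "r \<noteq> 0" by auto
  then have "degree p = Suc (degree r)"
    unfolding r by (subst degree_mult_eq) auto
  moreover have "poly r s = 0" if "s \<in> S" for s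
    using insert.hyps(2) insert.prems(3)[of s] that unfolding r by auto
  ultimately have "r = (\<Prod>s\<in>S. [:-s, 1:])"
    using insert \<open>lead_coeff r = 1\<close> by simp
  then show ?case using r insert.hyps by simp
qed

definition unity_root :: "nat \<Rightarrow> nat \<Rightarrow> complex" where
  "unity_root q j = cis (2 * pi * real j / real q)"

lemma norm_unity_root [simp]: "norm (unity_root q j) = 1"
  unfolding unity_root_def by simp

lemma unity_root_pow_eq_1: "q > 0 \<Longrightarrow> unity_root q j ^ q = 1"
  unfolding unity_root_def by (simp add: DeMoivre)

lemma inj_on_unity_root: "q > 0 \<Longrightarrow> inj_on (unity_root q) {..<q}"
  using bij_betw_roots_unity[of q] unfolding bij_betw_def unity_root_def by blast

definition geom_poly :: "'a::comm_ring_1 \<Rightarrow> nat \<Rightarrow> 'a poly" where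
  "geom_poly a q = (\<Sum>k<q. monom (a ^ (q - 1 - k)) k)"

lemma coeff_geom_poly: "coeff (geom_poly a q) k = (if k < q then a ^ (q - 1 - k) else 0)"
  unfolding geom_poly_def by (simp add: coeff_sum coeff_monom)

lemma poly_geom_poly: "poly (geom_poly a q) z = (\<Sum>k<q. a ^ (q - 1 - k) * z ^ k)"
  unfolding geom_poly_def by (simp add: poly_sum poly_monom)

lemma degree_geom_poly: "q > 0 \<Longrightarrow> degree (geom_poly a q) = q - 1"
  by (intro antisym degree_le le_degree) (auto simp: coeff_geom_poly)

lemma lead_coeff_geom_poly: "q > 0 \<Longrightarrow> lead_coeff (geom_poly a q) = 1"
  by (simp add: degree_geom_poly coeff_geom_poly)

lemma poly_geom_poly_mult: "poly (geom_poly a q) z * (z - a) = z ^ q - a ^ q"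
proof (cases q)
  case (Suc n)
  have "z ^ Suc n - a ^ Suc n = (z - a) * (\<Sum>k<Suc n. z ^ k * a ^ (n - k))"
    by (rule diff_power_eq_sum)
  then show ?thesis unfolding poly_geom_poly Suc by (simp add: mult_ac)
qed (simp add: poly_geom_poly)

lemma poly_geom_poly_self: "poly (geom_poly a q) a = of_nat q * a ^ (q - 1)"
proof -
  have "a ^ (q - 1 - k) * a ^ k = a ^ (q - 1)" if "k < q" for k
    using that by (simp flip: power_add)
  then show ?thesis unfolding poly_geom_poly by simp
qed

lemma geom_poly_unity_root_eq_prod:
  assumes q: "q > 0" and l: "l < q"
  shows "geom_poly (unity_root q l) q = (\<Prod>j\<in>{..<q} - {l}. [:- unity_root q j, 1:])"
proof -
  have inj: "inj_on (unity_root q) ({..<q} - {l})"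
    using inj_on_unity_root[OF q] by (rule inj_on_subset) auto
  have "geom_poly (unity_root q l) q = (\<Prod>s\<in>unity_root q ` ({..<q} - {l}). [:-s, 1:])"
  proof (rule monic_eq_prod_roots)
    show "card (unity_root q ` ({..<q} - {l})) = degree (geom_poly (unity_root q l) q)"
      using card_image[OF inj] l q by (simp add: degree_geom_poly)
    show "lead_coeff (geom_poly (unity_root q l) q) = 1"
      using q by (rule lead_coeff_geom_poly)
  next
    fix s assume "s \<in> unity_root q ` ({..<q} - {l})"
    then obtain j where j: "j < q" "j \<noteq> l" "s = unity_root q j" by auto
    then have "s \<noteq> unity_root q l"
      using inj_on_unity_root[OF q] l unfolding inj_on_def by auto
    moreover have "poly (geom_poly (unity_root q l) q) s * (s - unity_root q l) = 0"
      unfolding poly_geom_poly_mult using j unity_root_pow_eq_1[OF q] by simp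
    ultimately show "poly (geom_poly (unity_root q l) q) s = 0" by simp
  qed simp
  also have "\<dots> = (\<Prod>j\<in>{..<q} - {l}. [:- unity_root q j, 1:])"
    using prod.reindex[OF inj] by simp
  finally show ?thesis .
qed

text \<open>Dividing a polynomial by a linear factor \<open>X - c\<close> with \<open>|c| = 1\<close> is the recursion
  \<open>coeff p k = coeff (p * (X - c)) (k + 1) + c * coeff p (k + 1)\<close>, run downwards from the
  leading coefficient; Pascal's rule turns this into a binomial bound.\<close>

lemma norm_coeff_le_binomial_div_linear:
  fixes p :: "'a::real_normed_field poly"
  assumes c: "norm c = 1"
    and bound: "\<And>k. norm (coeff (p * [:-c, 1:]) k)
                     \<le> real ((degree (p * [:-c, 1:]) - k + e) choose e)"
  shows "norm (coeff p k) \<le> real ((degree p - k + Suc e) choose Suc e)"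
proof (cases "p = 0 \<or> degree p < k")
  case True
  then show ?thesis by (auto simp: coeff_eq_0)
next
  case False
  let ?p' = "p * [:-c, 1:]"
  have deg: "degree ?p' = Suc (degree p)"
    using False by (subst degree_mult_eq) auto
  have recur: "coeff p n = coeff ?p' (Suc n) + c * coeff p (Suc n)" for n
    by simp
  from False have "k \<le> degree p" by simp
  then show ?thesis
  proof (induction k rule: inc_induct)
    case base
    have "norm (coeff p (degree p)) \<le> real ((degree ?p' - Suc (degree p) + e) choose e)"
      using recur[of "degree p"] bound[of "Suc (degree p)"] by (simp add: coeff_eq_0)
    then show ?case using deg by simp
  next
    case (step n)
    have "norm (coeff p n) \<le> norm (coeff ?p' (Suc n)) + norm (coeff p (Suc n))"
      using recur[of n] norm_triangle_ineq[of "coeff ?p' (Suc n)" "c * coeff p (Suc n)"]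
      by (simp add: norm_mult c)
    also have "\<dots> \<le> real ((degree p - n + e) choose e)
        + real ((degree p - Suc n + Suc e) choose Suc e)"
      using bound[of "Suc n"] step.IH deg by (intro add_mono) simp_all
    also have "\<dots> = real ((degree p - n + Suc e) choose Suc e)"
      using step.hyps by (simp add: Suc_diff_Suc)
    finally show ?case .
  qed
qed

lemma norm_coeff_le_binomial_div_linears:
  fixes p g :: "'a::real_normed_field poly" and r :: "'b \<Rightarrow> 'a"
  assumes "finite U" and "p * (\<Prod>j\<in>U. [:-r j, 1:]) = g"
    and "\<And>k. norm (coeff g k) \<le> 1" and "\<And>j. j \<in> U \<Longrightarrow> norm (r j) = 1"
  shows "norm (coeff p k) \<le> real ((degree p - k + card U) choose card U)"
  using assms
proof (induction U arbitrary: p k rule: finite_induct)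
  case (insert a U)
  have "(p * [:-r a, 1:]) * (\<Prod>j\<in>U. [:-r j, 1:]) = g"
    by (metis insert.prems(1) prod.insert[OF insert.hyps] mult.assoc mult.commute)
  then have "norm (coeff (p * [:-r a, 1:]) k)
      \<le> real ((degree (p * [:-r a, 1:]) - k + card U) choose card U)" for k
    using insert by blast
  then show ?case
    using norm_coeff_le_binomial_div_linear[of "r a"] insert by simp
qed simp

definition lagrange_numerator :: "nat \<Rightarrow> nat set \<Rightarrow> nat \<Rightarrow> complex poly" where
  "lagrange_numerator q J l = (\<Prod>j\<in>J - {l}. [:- unity_root q j, 1:])"

lemma degree_lagrange_numerator:
  "finite J \<Longrightarrow> l \<in> J \<Longrightarrow> degree (lagrange_numerator q J l) = card J - 1"
  unfolding lagrange_numerator_def by (subst degree_prod_eq_sum_degree) auto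

lemma poly_lagrange_numerator_other:
  "finite J \<Longrightarrow> j \<in> J \<Longrightarrow> j \<noteq> l \<Longrightarrow> poly (lagrange_numerator q J l) (unity_root q j) = 0"
  unfolding lagrange_numerator_def poly_prod by (intro prod_zero) auto

lemma lagrange_numerator_mult_complement:
  assumes q: "q > 0" and J: "J \<subseteq> {..<q}" and l: "l \<in> J"
  shows "lagrange_numerator q J l * (\<Prod>j\<in>{..<q} - J. [:- unity_root q j, 1:])
       = geom_poly (unity_root q l) q"
proof -
  have "{..<q} - {l} = (J - {l}) \<union> ({..<q} - J)" and "l < q"
    using J l by auto
  then have "geom_poly (unity_root q l) q
      = (\<Prod>j\<in>(J - {l}) \<union> ({..<q} - J). [:- unity_root q j, 1:])"
    by (simp only: geom_poly_unity_root_eq_prod[OF q])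
  also have "\<dots> = lagrange_numerator q J l * (\<Prod>j\<in>{..<q} - J. [:- unity_root q j, 1:])"
    unfolding lagrange_numerator_def using finite_subset[OF J] by (subst prod.union_disjoint) auto
  finally show ?thesis by simp
qed

lemma norm_coeff_lagrange_numerator_le:
  assumes q: "q > 0" and J: "J \<subseteq> {..<q}" and l: "l \<in> J"
  shows "norm (coeff (lagrange_numerator q J l) k) \<le> real ((q - 1) choose (q - card J))"
proof -
  have fin: "finite J" using J finite_subset by blast
  have card_compl: "card ({..<q} - J) = q - card J"
    using J fin by (simp add: card_Diff_subset)
  have "norm (coeff (lagrange_numerator q J l) k)
      \<le> real ((degree (lagrange_numerator q J l) - k + (q - card J)) choose (q - card J))"
    using norm_coeff_le_binomial_div_linears[OF _ lagrange_numerator_mult_complement[OF q J l]]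
    by (simp add: card_compl coeff_geom_poly norm_power)
  also have "\<dots> \<le> real ((q - 1) choose (q - card J))"
  proof -
    have "card J \<ge> 1" "card J \<le> q"
      using l fin card_mono[OF _ J] by (auto simp: Suc_le_eq card_gt_0_iff)
    then have "degree (lagrange_numerator q J l) - k + (q - card J) \<le> q - 1"
      using degree_lagrange_numerator[OF fin l, of q] by linarith
    then show ?thesis using binomial_right_mono by simp
  qed
  finally show ?thesis .
qed

lemma norm_poly_lagrange_numerator_ge:
  assumes q: "q > 0" and J: "J \<subseteq> {..<q}" and l: "l \<in> J"
  shows "real q / 2 ^ (q - card J) \<le> norm (poly (lagrange_numerator q J l) (unity_root q l))"
proof -
  let ?x = "unity_root q l"
  let ?H = "\<Prod>j\<in>{..<q} - J. [:- unity_root q j, 1:]"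
  have fin: "finite J" using J finite_subset by blast
  have eq: "norm (poly (lagrange_numerator q J l) ?x) * norm (poly ?H ?x) = real q"
    using arg_cong[OF lagrange_numerator_mult_complement[OF q J l], of "\<lambda>p. norm (poly p ?x)"]
    by (simp add: poly_geom_poly_self norm_mult norm_power)
  have "norm (poly ?H ?x) = (\<Prod>j\<in>{..<q} - J. norm (?x - unity_root q j))"
    by (simp add: poly_prod prod_norm)
  also have "\<dots> \<le> (\<Prod>j\<in>{..<q} - J. 2)"
  proof (rule prod_mono)
    fix j show "0 \<le> norm (?x - unity_root q j) \<and> norm (?x - unity_root q j) \<le> 2"
      using norm_triangle_ineq4[of ?x "unity_root q j"] by simp
  qed
  also have "\<dots> = 2 ^ (q - card J)"
    using J fin by (simp add: card_Diff_subset)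
  finally have "real q \<le> norm (poly (lagrange_numerator q J l) ?x) * 2 ^ (q - card J)"
    using eq by (metis mult_left_mono norm_ge_zero)
  then show ?thesis by (simp add: divide_le_eq)
qed

lemma sum_norm_sq_le_of_left_inverse:
  fixes V a :: "nat \<Rightarrow> nat \<Rightarrow> 'a::real_normed_field"
  assumes inv: "\<And>i m. i < t \<Longrightarrow> m < t \<Longrightarrow> (\<Sum>k<t. a i k * V k m) = (if m = i then 1 else 0)"
    and bound: "\<And>i k. i < t \<Longrightarrow> k < t \<Longrightarrow> norm (a i k) \<le> A"
  shows "(\<Sum>i<t. (norm (y i))\<^sup>2) \<le> (A * t)\<^sup>2 * (\<Sum>k<t. (norm (\<Sum>m<t. V k m * y m))\<^sup>2)"
proof -
  define s where "s k = (\<Sum>m<t. V k m * y m)" for k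
  have "(norm (y i))\<^sup>2 \<le> A\<^sup>2 * (real t * (\<Sum>k<t. (norm (s k))\<^sup>2))" if i: "i < t" for i
  proof -
    have "y i = (\<Sum>m<t. if m = i then y m else 0)"
      using i by simp
    also have "\<dots> = (\<Sum>m<t. (\<Sum>k<t. a i k * V k m) * y m)"
      using i by (intro sum.cong) (simp_all add: inv)
    also have "\<dots> = (\<Sum>k<t. a i k * s k)"
      unfolding s_def sum_distrib_left sum_distrib_right by (subst sum.swap) (simp add: mult.assoc)
    finally have "norm (y i) \<le> (\<Sum>k<t. norm (a i k) * norm (s k))"
      using norm_sum[of "\<lambda>k. a i k * s k" "{..<t}"] by (simp add: norm_mult)
    also have "\<dots> \<le> A * (\<Sum>k<t. norm (s k))"
      unfolding sum_distrib_left using bound[OF i] by (intro sum_mono mult_right_mono) auto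
    finally have "(norm (y i))\<^sup>2 \<le> (A * (\<Sum>k<t. norm (s k)))\<^sup>2"
      by (simp add: power_mono)
    also have "\<dots> = A\<^sup>2 * (\<Sum>k<t. norm (s k))\<^sup>2"
      by (simp add: power_mult_distrib)
    also have "\<dots> \<le> A\<^sup>2 * (real t * (\<Sum>k<t. (norm (s k))\<^sup>2))"
      using square_sum_le_card_mult_sum_square[of "\<lambda>k. norm (s k)" "{..<t}"]
      by (intro mult_left_mono) auto
    finally show ?thesis .
  qed
  then have "(\<Sum>i<t. (norm (y i))\<^sup>2) \<le> (\<Sum>i<t. A\<^sup>2 * (real t * (\<Sum>k<t. (norm (s k))\<^sup>2)))"
    by (intro sum_mono) auto
  also have "\<dots> = (A * t)\<^sup>2 * (\<Sum>k<t. (norm (s k))\<^sup>2)"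
    by (simp add: power2_eq_square)
  finally show ?thesis unfolding s_def .
qed

definition unity_vandermonde_inv_bound :: "nat \<Rightarrow> nat \<Rightarrow> real" where
  "unity_vandermonde_inv_bound q t = real ((q - 1) choose (q - t)) * 2 ^ (q - t) / real q"

lemma unity_vandermonde_inv_bound_le:
  assumes "0 < q"
  shows "unity_vandermonde_inv_bound q t * real q \<le> 2 * real q ^ (q - t)"
proof -
  let ?d = "q - t"
  have "((q - 1) choose ?d) * 2 ^ ?d \<le> 2 * (((q - 1) choose ?d) * fact ?d)"
    using mult_left_mono[OF two_pow_le_two_mult_fact, of "(q - 1) choose ?d" ?d] by simp
  also have "\<dots> \<le> 2 * (q - 1) ^ ?d"
    using binomial_fact_pow by simp
  also have "\<dots> \<le> 2 * q ^ ?d"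
    by (simp add: power_mono)
  finally have "real (((q - 1) choose ?d) * 2 ^ ?d) \<le> real (2 * q ^ ?d)"
    by (simp only: of_nat_le_iff)
  then show ?thesis
    unfolding unity_vandermonde_inv_bound_def using assms by simp
qed

text \<open>The rows of the inverse of the Vandermonde matrix \<open>(x\<^sub>m\<^sup>k)\<close> are the coefficient vectors of
  the Lagrange basis polynomials \<open>lagrange_numerator / lagrange_numerator(x\<^sub>i)\<close>.\<close>

lemma sum_norm_sq_le_unity_vandermonde:
  assumes q: "q > 0" and idx: "distinct idx" "\<forall>i\<in>set idx. i < q" "length idx = t"
  shows "(\<Sum>i<t. (norm (y i))\<^sup>2) \<le> (unity_vandermonde_inv_bound q t * t)\<^sup>2
           * (\<Sum>k<t. (norm (\<Sum>m<t. unity_root q (idx ! m) ^ k * y m))\<^sup>2)"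
proof -
  let ?J = "set idx"
  let ?L = "\<lambda>i. lagrange_numerator q ?J (idx ! i)"
  let ?D = "\<lambda>i. poly (?L i) (unity_root q (idx ! i))"
  have J: "?J \<subseteq> {..<q}" and card_J: "card ?J = t"
    using idx distinct_card by auto
  have node: "idx ! i \<in> ?J" if "i < t" for i
    using that idx by auto
  have D: "real q / 2 ^ (q - t) \<le> norm (?D i)" if "i < t" for i
    using norm_poly_lagrange_numerator_ge[OF q J node[OF that]] card_J by simp
  moreover have "0 < real q / 2 ^ (q - t)" using q by simp
  ultimately have D0: "?D i \<noteq> 0" if "i < t" for i
    using that by fastforce
  show ?thesis
  proof (rule sum_norm_sq_le_of_left_inverse)
    fix i m assume i: "i < t" and m: "m < t"
    have "{..<t} = {..degree (?L i)}"
      using degree_lagrange_numerator[OF _ node[OF i]] card_J i by auto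
    then have "(\<Sum>k<t. coeff (?L i) k / ?D i * unity_root q (idx ! m) ^ k)
        = poly (?L i) (unity_root q (idx ! m)) / ?D i"
      by (simp add: poly_altdef[of "?L i" "unity_root q (idx ! m)"] sum_divide_distrib)
    also have "\<dots> = (if m = i then 1 else 0)"
    proof (cases "m = i")
      case False
      then have "idx ! m \<noteq> idx ! i"
        using nth_eq_iff_index_eq[OF idx(1)] i m idx(3) by auto
      then show ?thesis
        using poly_lagrange_numerator_other[OF _ node[OF m]] False by simp
    qed (use D0[OF i] in simp)
    finally show "(\<Sum>k<t. coeff (?L i) k / ?D i * unity_root q (idx ! m) ^ k)
        = (if m = i then 1 else 0)" .
  next
    fix i k assume i: "i < t"
    have "norm (coeff (?L i) k / ?D i) \<le> real ((q - 1) choose (q - t)) / (real q / 2 ^ (q - t))"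
      unfolding norm_divide
      using norm_coeff_lagrange_numerator_le[OF q J node[OF i]] card_J D[OF i] q
      by (intro frac_le) auto
    then show "norm (coeff (?L i) k / ?D i) \<le> unity_vandermonde_inv_bound q t"
      by (simp add: unity_vandermonde_inv_bound_def)
  qed
qed

definition trig_sum :: "real \<Rightarrow> nat list \<Rightarrow> (nat \<Rightarrow> complex) \<Rightarrow> real \<Rightarrow> complex" where
  "trig_sum \<theta> idx y x = (\<Sum>m<length idx. cis (\<theta> * real (idx ! m) * x) * y m)"

lemma norm_trig_sum_sq_le:
  "(norm (trig_sum \<theta> idx y x))\<^sup>2 \<le> real (length idx) * (\<Sum>m<length idx. (norm (y m))\<^sup>2)"
proof -
  have "norm (trig_sum \<theta> idx y x) \<le> (\<Sum>m<length idx. norm (y m))"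
    unfolding trig_sum_def
    using norm_sum[of "\<lambda>m. cis (\<theta> * real (idx ! m) * x) * y m" "{..<length idx}"]
    by (simp add: norm_mult)
  then have "(norm (trig_sum \<theta> idx y x))\<^sup>2 \<le> (\<Sum>m<length idx. norm (y m))\<^sup>2"
    by (simp add: power_mono)
  also have "\<dots> \<le> real (length idx) * (\<Sum>m<length idx. (norm (y m))\<^sup>2)"
    using square_sum_le_card_mult_sum_square[of "\<lambda>m. norm (y m)" "{..<length idx}"] by simp
  finally show ?thesis .
qed

lemma sum_norm_sq_le_trig_sums:
  assumes q: "q > 0" and idx: "distinct idx" "\<forall>i\<in>set idx. i < q" "length idx = t"
  shows "(\<Sum>m<t. (norm (y m))\<^sup>2) \<le> (unity_vandermonde_inv_bound q t * t)\<^sup>2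
           * (\<Sum>k<t. (norm (trig_sum (2 * pi / q) idx y (x + real k)))\<^sup>2)"
proof -
  define y' where "y' m = cis (2 * pi / q * real (idx ! m) * x) * y m" for m
  have "unity_root q (idx ! m) ^ k * y' m = cis (2 * pi / q * real (idx ! m) * (x + real k)) * y m"
    for k m
    unfolding y'_def unity_root_def DeMoivre mult.assoc[symmetric] cis_mult
    by (simp add: algebra_simps add_divide_distrib)
  then have "trig_sum (2 * pi / q) idx y (x + real k) = (\<Sum>m<t. unity_root q (idx ! m) ^ k * y' m)"
    for k
    unfolding trig_sum_def idx(3) by simp
  moreover have "(\<Sum>m<t. (norm (y m))\<^sup>2) = (\<Sum>m<t. (norm (y' m))\<^sup>2)"
    unfolding y'_def by (simp add: norm_mult)
  ultimately show ?thesis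
    using sum_norm_sq_le_unity_vandermonde[OF q idx, of y'] by simp
qed

section \<open>Spectral norm and condition number\<close>

lemma real_symmetric_form_real:
  fixes A :: "real mat" and v :: "complex vec"
  assumes sym: "\<And>i j. i < N \<Longrightarrow> j < N \<Longrightarrow> A $$ (i, j) = A $$ (j, i)"
  shows "(\<Sum>i<N. (\<Sum>j<N. of_real (A $$ (i, j)) * v $ j) * cnj (v $ i)) \<in> \<real>"
proof -
  let ?S = "\<Sum>i<N. (\<Sum>j<N. of_real (A $$ (i, j)) * v $ j) * cnj (v $ i)"
  have "cnj ?S = (\<Sum>i<N. \<Sum>j<N. of_real (A $$ (i, j)) * cnj (v $ j) * v $ i)"
    by (simp add: sum_distrib_right)
  also have "\<dots> = (\<Sum>j<N. \<Sum>i<N. of_real (A $$ (i, j)) * cnj (v $ j) * v $ i)"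
    by (rule sum.swap)
  also have "\<dots> = ?S"
    unfolding sum_distrib_right by (intro sum.cong refl) (simp add: sym mult_ac)
  finally show ?thesis by (simp only: Reals_cnj_iff)
qed

lemma real_symmetric_has_eigenvalue:
  fixes A :: "real mat"
  assumes A: "A \<in> carrier_mat N N" and N: "0 < N"
    and sym: "\<And>i j. i < N \<Longrightarrow> j < N \<Longrightarrow> A $$ (i, j) = A $$ (j, i)"
  shows "\<exists>e. eigenvalue A e"
proof -
  let ?Ac = "map_mat complex_of_real A"
  have Ac: "?Ac \<in> carrier_mat N N" using A by simp
  have "degree (char_poly ?Ac) = N" using degree_monic_char_poly[OF Ac] by simp
  then obtain lam where root: "poly (char_poly ?Ac) lam = 0"
    using N fundamental_theorem_of_algebra constant_degree by (metis neq0_conv)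
  then obtain v where v: "v \<in> carrier_vec N" "v \<noteq> 0\<^sub>v N" "?Ac *\<^sub>v v = lam \<cdot>\<^sub>v v"
    using eigenvalue_root_char_poly[OF Ac] A unfolding eigenvalue_def eigenvector_def by auto
  have row: "(\<Sum>j<N. of_real (A $$ (i, j)) * v $ j) = lam * v $ i" if "i < N" for i
  proof -
    have "(?Ac *\<^sub>v v) $ i = (\<Sum>j<N. of_real (A $$ (i, j)) * v $ j)"
      using A v(1) that by (simp add: scalar_prod_def lessThan_atLeast0)
    then show ?thesis using v(3) v(1) that by simp
  qed
  define R where "R = (\<Sum>i<N. (cmod (v $ i))\<^sup>2)"
  have form: "(\<Sum>i<N. (\<Sum>j<N. of_real (A $$ (i, j)) * v $ j) * cnj (v $ i)) \<in> \<real>"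
    by (rule real_symmetric_form_real[OF sym])
  have "(\<Sum>i<N. (\<Sum>j<N. of_real (A $$ (i, j)) * v $ j) * cnj (v $ i))
      = (\<Sum>i<N. lam * (v $ i * cnj (v $ i)))"
    by (simp add: row mult.assoc)
  also have "\<dots> = lam * of_real R"
    unfolding R_def by (simp only: of_real_sum sum_distrib_left complex_norm_square)
  finally have "lam * of_real R \<in> \<real>"
    using form by simp
  moreover have "R > 0"
  proof -
    obtain i where i: "i < N" "v $ i \<noteq> 0"
      using v(1,2) by (metis eq_vecI carrier_vecD index_zero_vec)
    then have "0 < (cmod (v $ i))\<^sup>2" by simp
    also have "\<dots> \<le> R" unfolding R_def using i by (intro member_le_sum) auto
    finally show ?thesis .
  qed
  ultimately have "lam = of_real (Re lam)"
    by (simp add: complex_eq_iff complex_is_Real_iff)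
  then have "of_real (poly (char_poly A) (Re lam)) = poly (char_poly ?Ac) lam"
    using of_real_hom.char_poly_hom[OF A] by (metis of_real_hom.poly_map_poly)
  then have "poly (char_poly A) (Re lam) = 0"
    using root by simp
  then show ?thesis using eigenvalue_root_char_poly[OF A] by blast
qed

lemma eigenvalue_gram_mat_bounds:
  fixes M :: "real mat"
  assumes M: "M \<in> carrier_mat m N" and e: "eigenvalue (transpose_mat M * M) e"
    and bound: "\<And>v. v \<in> carrier_vec N \<Longrightarrow> (M *\<^sub>v v) \<bullet> (M *\<^sub>v v) \<le> B\<^sup>2 * (v \<bullet> v)"
  shows "0 \<le> e \<and> e \<le> B\<^sup>2"
proof -
  have A: "transpose_mat M * M \<in> carrier_mat N N" using M by simp
  obtain v where v: "v \<in> carrier_vec N" "v \<noteq> 0\<^sub>v N" "(transpose_mat M * M) *\<^sub>v v = e \<cdot>\<^sub>v v"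
    using e A unfolding eigenvalue_def eigenvector_def by auto
  have "e * (v \<bullet> v) = ((transpose_mat M * M) *\<^sub>v v) \<bullet> v"
    using v by simp
  also have "\<dots> = (transpose_mat M *\<^sub>v (M *\<^sub>v v)) \<bullet> v"
    using M v by (subst assoc_mult_mat_vec[of _ N m _ N]) auto
  also have "\<dots> = (M *\<^sub>v v) \<bullet> (M *\<^sub>v v)"
    using M v by (intro transpose_vec_mult_scalar) auto
  finally have eq: "e * (v \<bullet> v) = (M *\<^sub>v v) \<bullet> (M *\<^sub>v v)" .
  have pos: "v \<bullet> v > 0"
    using conjugate_square_greater_0_vec[OF v(1)] v(2) by simp
  have "0 \<le> (M *\<^sub>v v) \<bullet> (M *\<^sub>v v)"
    using conjugate_square_ge_0_vec[of "M *\<^sub>v v"] by simp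
  then have "0 \<le> e * (v \<bullet> v)" "e * (v \<bullet> v) \<le> B\<^sup>2 * (v \<bullet> v)"
    using eq bound[OF v(1)] by simp_all
  then show ?thesis
    using pos by (simp add: zero_le_mult_iff)
qed

lemma spec_norm_nonneg_le:
  fixes M :: "real mat"
  assumes M: "M \<in> carrier_mat m N" and N: "0 < N" and B: "0 \<le> B"
    and bound: "\<And>v. v \<in> carrier_vec N \<Longrightarrow> (M *\<^sub>v v) \<bullet> (M *\<^sub>v v) \<le> B\<^sup>2 * (v \<bullet> v)"
  shows "0 \<le> spec_norm M \<and> spec_norm M \<le> B"
proof -
  let ?A = "transpose_mat M * M"
  let ?E = "{e. eigenvalue ?A e}"
  have A: "?A \<in> carrier_mat N N" using M by simp
  have "?E \<subseteq> {x. poly (char_poly ?A) x = 0}"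
    using eigenvalue_root_char_poly[OF A] by auto
  moreover have "char_poly ?A \<noteq> 0"
    using degree_monic_char_poly[OF A] by auto
  ultimately have "finite ?E"
    using poly_roots_finite finite_subset by blast
  moreover have "?A $$ (i, j) = ?A $$ (j, i)" if "i < N" "j < N" for i j
    using M that by (simp add: scalar_prod_def mult.commute)
  then have "?E \<noteq> {}"
    using real_symmetric_has_eigenvalue[OF A N] by auto
  ultimately have "Max ?E \<in> ?E"
    by (rule Max_in)
  then have "0 \<le> Max ?E \<and> Max ?E \<le> B\<^sup>2"
    using eigenvalue_gram_mat_bounds[OF M _ bound] by simp
  then show ?thesis
    unfolding spec_norm_def using B real_sqrt_le_mono[of "Max ?E" "B\<^sup>2"] by auto
qed

lemma inv_mat_inverse:
  fixes M :: "real mat"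
  assumes M: "M \<in> carrier_mat N N" and inv: "invertible_mat M"
  shows "inv_mat M \<in> carrier_mat N N \<and> M * inv_mat M = 1\<^sub>m N \<and> inv_mat M * M = 1\<^sub>m N"
proof -
  obtain B where B1: "M * B = 1\<^sub>m N" and B2: "B * M = 1\<^sub>m (dim_row B)"
    using inv M unfolding invertible_mat_def inverts_mat_def by auto
  have B: "B \<in> carrier_mat N N"
    using B1 B2 M by (metis carrier_matD(2) carrier_matI index_mult_mat(2,3) index_one_mat(2,3))
  have "inv_mat M = B"
    unfolding inv_mat_def
  proof (rule the_equality)
    fix B' assume "B' \<in> carrier_mat (dim_row M) (dim_row M) \<and> inverts_mat M B' \<and> inverts_mat B' M"
    then have B': "B' \<in> carrier_mat N N" "B' * M = 1\<^sub>m N"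
      using M unfolding inverts_mat_def by auto
    have "B' = B' * (M * B)" using B' B1 by simp
    also have "\<dots> = (B' * M) * B" using B'(1) M B by (simp add: assoc_mult_mat)
    also have "\<dots> = B" using B'(2) B by simp
    finally show "B' = B" .
  qed (use B B1 B2 M in \<open>auto simp: inverts_mat_def\<close>)
  then show ?thesis using B B1 B2 by simp
qed

lemma invertible_mat_of_kernel_trivial:
  fixes M :: "'a::field mat"
  assumes M: "M \<in> carrier_mat N N"
    and ker: "\<And>v. v \<in> carrier_vec N \<Longrightarrow> M *\<^sub>v v = 0\<^sub>v N \<Longrightarrow> v = 0\<^sub>v N"
  shows "invertible_mat M"
proof -
  have "det M \<noteq> 0" using det_0_iff_vec_prod_zero_field[OF M] ker by auto
  then obtain B where "B \<in> carrier_mat N N" "B * M = 1\<^sub>m N" "M * B = 1\<^sub>m N"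
    using det_non_zero_imp_unit[OF M] unfolding Units_def ring_mat_def by auto
  then show ?thesis
    using M unfolding invertible_mat_def inverts_mat_def square_mat.simps by auto
qed

lemma invertible_cond_num_le:
  fixes M :: "real mat"
  assumes M: "M \<in> carrier_mat N N" and N: "0 < N" and "0 \<le> L" "0 \<le> U"
    and lower: "\<And>v. v \<in> carrier_vec N \<Longrightarrow> v \<bullet> v \<le> L\<^sup>2 * ((M *\<^sub>v v) \<bullet> (M *\<^sub>v v))"
    and upper: "\<And>v. v \<in> carrier_vec N \<Longrightarrow> (M *\<^sub>v v) \<bullet> (M *\<^sub>v v) \<le> U\<^sup>2 * (v \<bullet> v)"
  shows "invertible_mat M \<and> cond_num M \<le> U * L"
proof -
  have inv: "invertible_mat M"
  proof (rule invertible_mat_of_kernel_trivial[OF M])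
    fix v :: "real vec" assume v: "v \<in> carrier_vec N" "M *\<^sub>v v = 0\<^sub>v N"
    then have "v \<bullet> v \<le> 0" using lower[OF v(1)] by simp
    then show "v = 0\<^sub>v N"
      using conjugate_square_greater_0_vec[OF v(1)] by fastforce
  qed
  let ?Mi = "inv_mat M"
  have Mi: "?Mi \<in> carrier_mat N N" "M * ?Mi = 1\<^sub>m N"
    using inv_mat_inverse[OF M inv] by auto
  have "0 \<le> spec_norm ?Mi \<and> spec_norm ?Mi \<le> L"
  proof (rule spec_norm_nonneg_le[OF Mi(1) N \<open>0 \<le> L\<close>])
    fix u :: "real vec" assume u: "u \<in> carrier_vec N"
    have "M *\<^sub>v (?Mi *\<^sub>v u) = u"
      using M Mi u by (simp flip: assoc_mult_mat_vec[OF M Mi(1) u])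
    then show "(?Mi *\<^sub>v u) \<bullet> (?Mi *\<^sub>v u) \<le> L\<^sup>2 * (u \<bullet> u)"
      using lower[of "?Mi *\<^sub>v u"] Mi(1) u by simp
  qed
  moreover have "0 \<le> spec_norm M \<and> spec_norm M \<le> U"
    using spec_norm_nonneg_le[OF M N \<open>0 \<le> U\<close> upper] .
  ultimately show ?thesis
    unfolding cond_num_def using inv by (simp add: mult_mono)
qed

section \<open>The recovery matrix\<close>

lemma dim_row_rot [simp]: "dim_row (rot a) = 2"
  and dim_col_rot [simp]: "dim_col (rot a) = 2"
  unfolding rot_def by simp_all

lemma rot_index:
  "i < 2 \<Longrightarrow> j < 2 \<Longrightarrow> rot a $$ (i, j) =
     (if i = 0 \<and> j = 0 then cos a else if i = 0 \<and> j = 1 then - sin a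
      else if i = 1 \<and> j = 0 then sin a else cos a)"
  unfolding rot_def by simp

lemma rot_add: "rot a * rot b = rot (a + b)"
proof (rule eq_matI)
  fix i j assume "i < dim_row (rot (a + b))" "j < dim_col (rot (a + b))"
  then have ij: "i < 2" "j < 2" by auto
  have "(rot a * rot b) $$ (i, j) = (\<Sum>k<2. rot a $$ (i, k) * rot b $$ (k, j))"
    using ij by (simp add: scalar_prod_def lessThan_atLeast0)
  also have "\<dots> = rot (a + b) $$ (i, j)"
    using ij by (auto simp: rot_index numeral_2_eq_2 cos_add sin_add less_Suc_eq)
  finally show "(rot a * rot b) $$ (i, j) = rot (a + b) $$ (i, j)" .
qed auto

lemma rot_pow: "rot a ^\<^sub>m k = rot (real k * a)"
proof (induction k)
  case 0
  have "rot 0 = 1\<^sub>m 2" by (rule eq_matI) (auto simp: rot_def)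
  then show ?case by simp
next
  case (Suc k)
  then show ?case by (simp add: rot_add algebra_simps)
qed

lemma dim_GA [simp]: "dim_row (GA \<theta> kA n) = 2 * kA" "dim_col (GA \<theta> kA n) = 2 * n"
  unfolding GA_def by simp_all

lemma dim_GB [simp]: "dim_row (GB \<theta> kA kB n) = 2 * kB" "dim_col (GB \<theta> kA kB n) = 2 * n"
  unfolding GB_def by simp_all

lemma GA_index:
  "r < 2 * kA \<Longrightarrow> c < 2 * n \<Longrightarrow>
     GA \<theta> kA n $$ (r, c) = rot (real (c div 2 * (r div 2)) * \<theta>) $$ (r mod 2, c mod 2)"
  unfolding GA_def by (simp add: rot_pow)

lemma GB_index:
  "r < 2 * kB \<Longrightarrow> c < 2 * n \<Longrightarrow>
     GB \<theta> kA kB n $$ (r, c) = rot (real (c div 2 * kA * (r div 2)) * \<theta>) $$ (r mod 2, c mod 2)"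
  unfolding GB_def by (simp add: rot_pow)

lemma dim_recovery_mat [simp]:
  "dim_row (recovery_mat \<theta> kA kB n idx) = 4 * kA * kB"
  "dim_col (recovery_mat \<theta> kA kB n idx) = 4 * length idx"
  unfolding recovery_mat_def by simp_all

lemma recovery_mat_index:
  assumes "r < 4 * kA * kB" "c < 4 * length idx"
  shows "recovery_mat \<theta> kA kB n idx $$ (r, c) =
    GA \<theta> kA n $$ (r div (2 * kB), 2 * idx ! (c div 4) + c mod 4 div 2) *
    GB \<theta> kA kB n $$ (r mod (2 * kB), 2 * idx ! (c div 4) + c mod 2)"
proof -
  have "r div (2 * kB) < 2 * kA"
    using assms(1) by (simp add: less_mult_imp_div_less mult.commute mult.left_commute)
  moreover have "r mod (2 * kB) < 2 * kB"
    using assms(1) by (cases "kB = 0") simp_all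
  moreover have "c mod 4 div 2 < 2" "c mod 4 < 2 * 2" "c mod 2 < 2" by simp_all
  moreover have "r < 2 * kA * (2 * kB)"
    using assms(1) by (simp add: mult.commute mult.left_commute)
  ultimately show ?thesis
    unfolding recovery_mat_def kron_def block_col_def
    using assms by (simp add: mod_mod_cancel)
qed

text \<open>Row \<open>(\<alpha>, i, \<beta>, j)\<close> and column \<open>(m, c\<^sub>1, c\<^sub>2)\<close> of the recovery matrix, in the order fixed by
  the Kronecker product: \<open>\<alpha>, \<beta>\<close> are block rows of \<open>G\<^sup>A, G\<^sup>B\<close>, \<open>m\<close> is the worker.\<close>

lemma recovery_mat_entry:
  assumes "\<alpha> < kA" "i < 2" "\<beta> < kB" "j < 2" "m < length idx" "c1 < 2" "c2 < 2" "idx ! m < n"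
  shows "recovery_mat \<theta> kA kB n idx $$ ((\<alpha> * 2 + i) * (kB * 2) + (\<beta> * 2 + j), m * 4 + (c1 * 2 + c2))
    = rot (real (idx ! m * \<alpha>) * \<theta>) $$ (i, c1) * rot (real (idx ! m * kA * \<beta>) * \<theta>) $$ (j, c2)"
proof -
  let ?r = "(\<alpha> * 2 + i) * (kB * 2) + (\<beta> * 2 + j)"
  have row: "\<alpha> * 2 + i < kA * 2" "\<beta> * 2 + j < kB * 2"
    using assms by linarith+
  then have "?r < 4 * kA * kB"
    using mult_add_less_mult[OF row] by (simp add: mult_ac)
  moreover have "?r div (2 * kB) = \<alpha> * 2 + i" "?r mod (2 * kB) = \<beta> * 2 + j"
    using row by (simp_all add: mult.commute[of 2 kB])
  moreover have "(m * 4 + (c1 * 2 + c2)) mod 2 = c2"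
    using \<open>c2 < 2\<close> by presburger
  ultimately show ?thesis
    using recovery_mat_index[of ?r kA kB "m * 4 + (c1 * 2 + c2)" idx \<theta> n] assms row
    by (simp add: GA_index GB_index mult.commute)
qed

text \<open>A real \<open>2 \<times> 2\<close> matrix \<open>X\<close>, acting on \<open>\<complex> = \<real>\<^sup>2\<close>, is the map
  \<open>z \<mapsto> lin_part X * z + antilin_part X * cnj z\<close>; conversely \<open>semilin_entry Z W\<close> is the real
  matrix of \<open>z \<mapsto> Z * z + W * cnj z\<close>.\<close>

definition lin_part :: "(nat \<Rightarrow> nat \<Rightarrow> real) \<Rightarrow> complex" where
  "lin_part X = Complex ((X 0 0 + X 1 1) / 2) ((X 1 0 - X 0 1) / 2)"

definition antilin_part :: "(nat \<Rightarrow> nat \<Rightarrow> real) \<Rightarrow> complex" where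
  "antilin_part X = Complex ((X 0 0 - X 1 1) / 2) ((X 1 0 + X 0 1) / 2)"

definition semilin_entry :: "complex \<Rightarrow> complex \<Rightarrow> nat \<Rightarrow> nat \<Rightarrow> real" where
  "semilin_entry Z W i j =
     (if i = 0 then (if j = 0 then Re Z + Re W else Im W - Im Z)
      else (if j = 0 then Im Z + Im W else Re Z - Re W))"

lemma rot_sandwich_eq_semilin_entry:
  assumes "i < 2" "j < 2"
  shows "(\<Sum>c1<2. \<Sum>c2<2. rot a $$ (i, c1) * rot b $$ (j, c2) * X c1 c2)
       = semilin_entry (cis (a - b) * lin_part X) (cis (a + b) * antilin_part X) i j"
proof -
  have "i = 0 \<or> i = 1" "j = 0 \<or> j = 1" using assms by auto
  then show ?thesis
    by (auto simp: sum_lessThan_2 rot_index semilin_entry_def lin_part_def antilin_part_def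
        cos_diff sin_diff cos_add sin_add field_simps)
qed

lemma semilin_entry_sum:
  "semilin_entry (\<Sum>m\<in>A. Z m) (\<Sum>m\<in>A. W m) i j = (\<Sum>m\<in>A. semilin_entry (Z m) (W m) i j)"
  unfolding semilin_entry_def by (simp add: sum.distrib sum_subtractf)

lemma sum_semilin_entry_sq:
  "(\<Sum>i<2. \<Sum>j<2. (semilin_entry Z W i j)\<^sup>2) = 2 * ((norm Z)\<^sup>2 + (norm W)\<^sup>2)"
  by (simp add: sum_lessThan_2 semilin_entry_def cmod_power2 power2_sum power2_diff algebra_simps)

lemma sum_sq_eq_norm_lin_antilin:
  "(\<Sum>c1<2. \<Sum>c2<2. (X c1 c2)\<^sup>2) = 2 * ((norm (lin_part X))\<^sup>2 + (norm (antilin_part X))\<^sup>2)"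
  by (simp add: sum_lessThan_2 lin_part_def antilin_part_def cmod_power2 power2_sum power2_diff
      power_divide field_simps)

definition lin_coord :: "real vec \<Rightarrow> nat \<Rightarrow> complex" where
  "lin_coord v m = lin_part (\<lambda>c1 c2. v $ (m * 4 + (c1 * 2 + c2)))"

definition antilin_coord :: "real vec \<Rightarrow> nat \<Rightarrow> complex" where
  "antilin_coord v m = antilin_part (\<lambda>c1 c2. v $ (m * 4 + (c1 * 2 + c2)))"

lemma scalar_prod_self_eq_coords:
  assumes "v \<in> carrier_vec (4 * t)"
  shows "v \<bullet> v = 2 * (\<Sum>m<t. (norm (lin_coord v m))\<^sup>2 + (norm (antilin_coord v m))\<^sup>2)"
proof -
  have "v \<bullet> v = (\<Sum>c<t * 4. (v $ c)\<^sup>2)"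
    using assms by (simp add: scalar_prod_def lessThan_atLeast0 power2_eq_square mult.commute)
  also have "\<dots> = (\<Sum>m<t. \<Sum>c1<2. \<Sum>c2<2. (v $ (m * 4 + (c1 * 2 + c2)))\<^sup>2)"
    by (simp add: sum_lessThan_mult sum_lessThan_mult[of _ 2 2, simplified])
  also have "\<dots> = 2 * (\<Sum>m<t. (norm (lin_coord v m))\<^sup>2 + (norm (antilin_coord v m))\<^sup>2)"
    unfolding lin_coord_def antilin_coord_def sum_sq_eq_norm_lin_antilin by (simp add: sum_distrib_left)
  finally show ?thesis .
qed

lemma recovery_mat_worker_block:
  assumes "\<alpha> < kA" "\<beta> < kB" "i < 2" "j < 2" "m < length idx" "idx ! m < n"
  shows "(\<Sum>c1<2. \<Sum>c2<2. recovery_mat \<theta> kA kB n idx $$ ((\<alpha> * 2 + i) * (kB * 2) + (\<beta> * 2 + j),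
                                                    m * 4 + (c1 * 2 + c2)) * X c1 c2)
    = semilin_entry (cis (\<theta> * real (idx ! m) * (real \<alpha> - real kA * real \<beta>)) * lin_part X)
                    (cis (\<theta> * real (idx ! m) * (real \<alpha> + real kA * real \<beta>)) * antilin_part X) i j"
proof -
  have "(\<Sum>c1<2. \<Sum>c2<2. recovery_mat \<theta> kA kB n idx $$ ((\<alpha> * 2 + i) * (kB * 2) + (\<beta> * 2 + j),
                                                    m * 4 + (c1 * 2 + c2)) * X c1 c2)
      = (\<Sum>c1<2. \<Sum>c2<2. rot (real (idx ! m * \<alpha>) * \<theta>) $$ (i, c1)
                          * rot (real (idx ! m * kA * \<beta>) * \<theta>) $$ (j, c2) * X c1 c2)"
    using assms by (intro sum.cong refl) (simp add: recovery_mat_entry)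
  also have "\<dots> = semilin_entry
      (cis (real (idx ! m * \<alpha>) * \<theta> - real (idx ! m * kA * \<beta>) * \<theta>) * lin_part X)
      (cis (real (idx ! m * \<alpha>) * \<theta> + real (idx ! m * kA * \<beta>) * \<theta>) * antilin_part X) i j"
    using assms by (intro rot_sandwich_eq_semilin_entry)
  finally show ?thesis
    by (simp add: algebra_simps)
qed

lemma recovery_mat_mult_vec_index:
  assumes idx: "length idx = kA * kB" "\<forall>i\<in>set idx. i < n" and v: "v \<in> carrier_vec (4 * kA * kB)"
    and "\<alpha> < kA" "\<beta> < kB" "i < 2" "j < 2"
  shows "(recovery_mat \<theta> kA kB n idx *\<^sub>v v) $ ((\<alpha> * 2 + i) * (kB * 2) + (\<beta> * 2 + j))
    = semilin_entry (trig_sum \<theta> idx (lin_coord v) (real \<alpha> - real kA * real \<beta>))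
                    (trig_sum \<theta> idx (antilin_coord v) (real \<alpha> + real kA * real \<beta>)) i j"
proof -
  let ?M = "recovery_mat \<theta> kA kB n idx"
  let ?r = "(\<alpha> * 2 + i) * (kB * 2) + (\<beta> * 2 + j)"
  let ?t = "kA * kB"
  have "?r < 4 * kA * kB"
    using assms mult_add_less_mult[of "\<alpha> * 2 + i" "kA * 2" "\<beta> * 2 + j" "kB * 2"] by (simp add: mult_ac)
  moreover have "dim_vec v = ?t * 4" using v by simp
  ultimately have "(?M *\<^sub>v v) $ ?r = (\<Sum>c<?t * 4. ?M $$ (?r, c) * v $ c)"
    using idx by (simp add: scalar_prod_def lessThan_atLeast0 mult.commute)
  also have "\<dots> = (\<Sum>m<?t. \<Sum>c1<2. \<Sum>c2<2.
      ?M $$ (?r, m * 4 + (c1 * 2 + c2)) * v $ (m * 4 + (c1 * 2 + c2)))"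
    by (simp add: sum_lessThan_mult sum_lessThan_mult[of _ 2 2, simplified])
  also have "\<dots> = (\<Sum>m<?t. semilin_entry
      (cis (\<theta> * real (idx ! m) * (real \<alpha> - real kA * real \<beta>)) * lin_coord v m)
      (cis (\<theta> * real (idx ! m) * (real \<alpha> + real kA * real \<beta>)) * antilin_coord v m) i j)"
    unfolding lin_coord_def antilin_coord_def using assms
    by (intro sum.cong refl recovery_mat_worker_block) auto
  finally show ?thesis
    unfolding trig_sum_def semilin_entry_sum idx(1) .
qed

lemma scalar_prod_self_recovery_mat_mult_vec:
  assumes idx: "length idx = kA * kB" "\<forall>i\<in>set idx. i < n" and v: "v \<in> carrier_vec (4 * kA * kB)"
  shows "(recovery_mat \<theta> kA kB n idx *\<^sub>v v) \<bullet> (recovery_mat \<theta> kA kB n idx *\<^sub>v v)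
    = 2 * (\<Sum>\<alpha><kA. \<Sum>\<beta><kB.
        (norm (trig_sum \<theta> idx (lin_coord v) (real \<alpha> - real kA * real \<beta>)))\<^sup>2
      + (norm (trig_sum \<theta> idx (antilin_coord v) (real \<alpha> + real kA * real \<beta>)))\<^sup>2)"
proof -
  let ?w = "recovery_mat \<theta> kA kB n idx *\<^sub>v v"
  have "?w \<bullet> ?w = (\<Sum>r<(kA * 2) * (kB * 2). (?w $ r)\<^sup>2)"
    by (simp add: scalar_prod_def lessThan_atLeast0 power2_eq_square mult_ac)
  also have "\<dots> = (\<Sum>\<alpha><kA. \<Sum>i<2. \<Sum>\<beta><kB. \<Sum>j<2. (?w $ ((\<alpha> * 2 + i) * (kB * 2) + (\<beta> * 2 + j)))\<^sup>2)"
    by (simp only: sum_lessThan_mult)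
  also have "\<dots> = (\<Sum>\<alpha><kA. \<Sum>\<beta><kB. \<Sum>i<2. \<Sum>j<2. (?w $ ((\<alpha> * 2 + i) * (kB * 2) + (\<beta> * 2 + j)))\<^sup>2)"
    by (intro sum.cong refl sum.swap)
  also have "\<dots> = 2 * (\<Sum>\<alpha><kA. \<Sum>\<beta><kB.
        (norm (trig_sum \<theta> idx (lin_coord v) (real \<alpha> - real kA * real \<beta>)))\<^sup>2
      + (norm (trig_sum \<theta> idx (antilin_coord v) (real \<alpha> + real kA * real \<beta>)))\<^sup>2)"
    by (simp add: recovery_mat_mult_vec_index[OF idx v] sum_semilin_entry_sq sum_distrib_left)
  finally show ?thesis .
qed

lemma recovery_mat_lower_bound:
  assumes "0 < q" "n \<le> q" "0 < kB"
    and idx: "length idx = kA * kB" "distinct idx" "\<forall>i\<in>set idx. i < n"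
    and v: "v \<in> carrier_vec (4 * kA * kB)"
  shows "v \<bullet> v \<le> (unity_vandermonde_inv_bound q (kA * kB) * (kA * kB))\<^sup>2
           * ((recovery_mat (2 * pi / q) kA kB n idx *\<^sub>v v) \<bullet> (recovery_mat (2 * pi / q) kA kB n idx *\<^sub>v v))"
proof -
  let ?t = "kA * kB"
  let ?c = "(unity_vandermonde_inv_bound q ?t * ?t)\<^sup>2"
  let ?S = "trig_sum (2 * pi / q) idx"
  have idx_q: "\<forall>i\<in>set idx. i < q" using idx(3) assms(2) by auto
  have "(\<Sum>m<?t. (norm (lin_coord v m))\<^sup>2)
      \<le> ?c * (\<Sum>k<?t. (norm (?S (lin_coord v) (- real kA * (real kB - 1) + real k)))\<^sup>2)"
    using sum_norm_sq_le_trig_sums[OF assms(1) idx(2) idx_q idx(1)] .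
  also have "\<dots> = ?c * (\<Sum>\<alpha><kA. \<Sum>\<beta><kB. (norm (?S (lin_coord v) (real \<alpha> - real kA * real \<beta>)))\<^sup>2)"
    by (simp only: sum_mixed_radix_diff[OF assms(3), of "\<lambda>x. (norm (?S (lin_coord v) x))\<^sup>2" kA])
  finally have lin: "(\<Sum>m<?t. (norm (lin_coord v m))\<^sup>2)
      \<le> ?c * (\<Sum>\<alpha><kA. \<Sum>\<beta><kB. (norm (?S (lin_coord v) (real \<alpha> - real kA * real \<beta>)))\<^sup>2)" .
  have "(\<Sum>m<?t. (norm (antilin_coord v m))\<^sup>2)
      \<le> ?c * (\<Sum>k<?t. (norm (?S (antilin_coord v) (0 + real k)))\<^sup>2)"
    using sum_norm_sq_le_trig_sums[OF assms(1) idx(2) idx_q idx(1)] .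
  also have "\<dots> = ?c * (\<Sum>\<alpha><kA. \<Sum>\<beta><kB. (norm (?S (antilin_coord v) (real \<alpha> + real kA * real \<beta>)))\<^sup>2)"
    by (simp only: sum_mixed_radix[of "\<lambda>x. (norm (?S (antilin_coord v) x))\<^sup>2" kA kB] add_0)
  finally have antilin: "(\<Sum>m<?t. (norm (antilin_coord v m))\<^sup>2)
      \<le> ?c * (\<Sum>\<alpha><kA. \<Sum>\<beta><kB. (norm (?S (antilin_coord v) (real \<alpha> + real kA * real \<beta>)))\<^sup>2)" .
  have "v \<in> carrier_vec (4 * ?t)" using v by (simp add: mult.assoc)
  then have "v \<bullet> v = 2 * ((\<Sum>m<?t. (norm (lin_coord v m))\<^sup>2) + (\<Sum>m<?t. (norm (antilin_coord v m))\<^sup>2))"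
    by (simp add: scalar_prod_self_eq_coords sum.distrib)
  also have "\<dots> \<le> ?c * ((recovery_mat (2 * pi / q) kA kB n idx *\<^sub>v v) \<bullet> (recovery_mat (2 * pi / q) kA kB n idx *\<^sub>v v))"
    unfolding scalar_prod_self_recovery_mat_mult_vec[OF idx(1,3) v]
    using lin antilin by (simp add: sum.distrib algebra_simps)
  finally show ?thesis .
qed

lemma recovery_mat_upper_bound:
  assumes idx: "length idx = kA * kB" "\<forall>i\<in>set idx. i < n" and v: "v \<in> carrier_vec (4 * kA * kB)"
  shows "(recovery_mat \<theta> kA kB n idx *\<^sub>v v) \<bullet> (recovery_mat \<theta> kA kB n idx *\<^sub>v v)
           \<le> (real (kA * kB))\<^sup>2 * (v \<bullet> v)"
proof -
  let ?t = "kA * kB"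
  have "v \<in> carrier_vec (4 * ?t)" using v by (simp add: mult.assoc)
  have "(recovery_mat \<theta> kA kB n idx *\<^sub>v v) \<bullet> (recovery_mat \<theta> kA kB n idx *\<^sub>v v)
      \<le> 2 * (\<Sum>\<alpha><kA. \<Sum>\<beta><kB. real ?t * (\<Sum>m<?t. (norm (lin_coord v m))\<^sup>2)
                                 + real ?t * (\<Sum>m<?t. (norm (antilin_coord v m))\<^sup>2))"
    unfolding scalar_prod_self_recovery_mat_mult_vec[OF idx v]
    using norm_trig_sum_sq_le[where idx = idx] idx(1)
    by (intro mult_left_mono sum_mono add_mono) simp_all
  also have "\<dots> = (real ?t)\<^sup>2 * (v \<bullet> v)"
    unfolding scalar_prod_self_eq_coords[OF \<open>v \<in> carrier_vec (4 * ?t)\<close>]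
    by (simp add: sum.distrib power2_eq_square algebra_simps)
  finally show ?thesis .
qed

lemma recovery_mat_invertible_cond_num_le:
  assumes "0 < kA" "0 < kB" "kA * kB < n" "n \<le> q"
    and idx: "length idx = kA * kB" "distinct idx" "\<forall>i\<in>set idx. i < n"
  shows "invertible_mat (recovery_mat (2 * pi / q) kA kB n idx)
    \<and> cond_num (recovery_mat (2 * pi / q) kA kB n idx) \<le> 2 * real q ^ Suc (q - kA * kB)"
proof -
  let ?M = "recovery_mat (2 * pi / q) kA kB n idx"
  let ?t = "kA * kB"
  let ?B = "unity_vandermonde_inv_bound q ?t"
  have t: "0 < ?t" "?t < q" using assms by simp_all
  have B: "0 \<le> ?B" unfolding unity_vandermonde_inv_bound_def by simp
  have M: "?M \<in> carrier_mat (4 * kA * kB) (4 * kA * kB)"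
    unfolding carrier_mat_def by (simp add: idx(1) mult.assoc)
  have "invertible_mat ?M \<and> cond_num ?M \<le> real ?t * (?B * real ?t)"
  proof (rule invertible_cond_num_le[OF M])
    show "0 < 4 * kA * kB" "0 \<le> ?B * real ?t" "0 \<le> real ?t" using t B by simp_all
  qed (use recovery_mat_lower_bound[OF _ assms(4) assms(2) idx] recovery_mat_upper_bound[OF idx(1,3)] t
      in simp_all)
  moreover have "real ?t * (?B * real ?t) \<le> real q * (?B * real q)"
  proof -
    have "real ?t \<le> real q" using t by linarith
    then show ?thesis using B by (intro mult_mono mult_left_mono) simp_all
  qed
  moreover have "real q * (?B * real q) \<le> real q * (2 * real q ^ (q - ?t))"
    using t by (intro mult_left_mono unity_vandermonde_inv_bound_le) simp_all
  ultimately show ?thesis by simp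
qed

theorem theorem4:
  "\<exists>C>0. \<forall>n q kA kB idx.
     odd q \<and> q \<ge> n \<and> 0 < kA \<and> 0 < kB \<and> kA * kB < n \<and>
     length idx = kA * kB \<and> distinct idx \<and> (\<forall>i\<in>set idx. i < n) \<longrightarrow>
       invertible_mat (recovery_mat (2 * pi / real q) kA kB n idx) \<and>
       cond_num (recovery_mat (2 * pi / real q) kA kB n idx)
         \<le> C * real q powr (real q - real (kA * kB) + 5.5)"
proof (intro exI[of _ 2] conjI allI impI)
  fix n q kA kB idx
  assume "odd q \<and> q \<ge> n \<and> 0 < kA \<and> 0 < kB \<and> kA * kB < n \<and>
     length idx = kA * kB \<and> distinct idx \<and> (\<forall>i\<in>set idx. i < n)"
  then have hyps: "0 < kA" "0 < kB" "kA * kB < n" "n \<le> q"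
      "length idx = kA * kB" "distinct idx" "\<forall>i\<in>set idx. i < n" and "kA * kB < q"
    by auto
  have "real q ^ Suc (q - kA * kB) = real q powr real (Suc (q - kA * kB))"
    using \<open>kA * kB < q\<close> by (subst powr_realpow) auto
  also have "\<dots> \<le> real q powr (real q - real (kA * kB) + 5.5)"
    using \<open>kA * kB < q\<close> by (intro powr_mono) (auto simp: of_nat_diff)
  finally show "invertible_mat (recovery_mat (2 * pi / real q) kA kB n idx)"
    and "cond_num (recovery_mat (2 * pi / real q) kA kB n idx)
         \<le> 2 * real q powr (real q - real (kA * kB) + 5.5)"
    using recovery_mat_invertible_cond_num_le[OF hyps] by auto
qed simp

end
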